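(* Let $R$ be a ring such that the right module $R_R$ is self-similar. Then $R_R$ is quasi-pseudo principally injective if and only if $R_R$ is semisimple.
   Context: All rings are associative with identity and all modules are unitary right $R$-modules. A submodule $N$ of $M$ is called $M$-cyclic if $N\cong M/L$ for some submodule $L$ of $M$ (equivalently, $N$ is the image of an endomorphism of $M$). $M$ is quasi-pseudo principally injective if for every $M$-cyclic submodule $A$ of $M$, every $R$-monomorphism $A\to M$ extends to an $R$-endomorphism of $M$. A module $M$ is self-similar if every nonzero submodule of $M$ is isomorphic to $M$. A module is semisimple if every submodule is a direct summand. *)

theory Defs
  imports Main
begin

text \<open>Submodules of R_R are right ideals;
  R-linear maps act on the right: f (x * r) = f x * r.\<close>

definition right_ideal :: "'a::ring_1 set \<Rightarrow> bool" where
  "right_ideal I \<longleftrightarrow> 0 \<in> I \<and> (\<forall>x\<in>I. \<forall>y\<in>I. x + y \<in> I) \<and> (\<forall>x\<in>I. - x \<in> I)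
     \<and> (\<forall>x\<in>I. \<forall>r. x * r \<in> I)"

definition rhom_on :: "'a::ring_1 set \<Rightarrow> ('a \<Rightarrow> 'a) \<Rightarrow> bool" where
  "rhom_on A f \<longleftrightarrow> (\<forall>x\<in>A. \<forall>y\<in>A. f (x + y) = f x + f y) \<and> (\<forall>x\<in>A. \<forall>r. f (x * r) = f x * r)"

text \<open>N is R_R-cyclic: N is the image of an endomorphism of R_R
  (equivalently N is isomorphic to a quotient R/L).\<close>
definition RR_cyclic :: "'a::ring_1 set \<Rightarrow> bool" where
  "RR_cyclic N \<longleftrightarrow> (\<exists>f. rhom_on UNIV f \<and> N = range f)"

definition RR_quasi_pseudo_principally_injective :: "'a::ring_1 itself \<Rightarrow> bool" where
  "RR_quasi_pseudo_principally_injective _ \<longleftrightarrow>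
     (\<forall>A::'a set. RR_cyclic A \<longrightarrow>
        (\<forall>f. rhom_on A f \<and> inj_on f A \<longrightarrow> (\<exists>g. rhom_on UNIV g \<and> (\<forall>x\<in>A. g x = f x))))"

definition RR_self_similar :: "'a::ring_1 itself \<Rightarrow> bool" where
  "RR_self_similar _ \<longleftrightarrow>
     (\<forall>N::'a set. right_ideal N \<and> N \<noteq> {0} \<longrightarrow> (\<exists>f. rhom_on N f \<and> bij_betw f N UNIV))"

definition RR_semisimple :: "'a::ring_1 itself \<Rightarrow> bool" where
  "RR_semisimple _ \<longleftrightarrow>
     (\<forall>N::'a set. right_ideal N \<longrightarrow>
        (\<exists>K. right_ideal K \<and> N \<inter> K = {0} \<and> {x + y | x y. x \<in> N \<and> y \<in> K} = UNIV))"

end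

theory Submission
  imports Defs
begin

text \<open>Semisimple implies quasi-pseudo principally injective for any ring: every right ideal A
  has a complement, and a monomorphism A \<rightarrow> R extends by precomposing with the projection onto A.
  Conversely, if R_R is self-similar, a nonzero right ideal N admits an isomorphism
  \<phi> : N \<rightarrow> R whose inverse is an endomorphism of R_R with image N, so N is R_R-cyclic and
  \<phi> extends to left multiplication by some c. Then e = \<phi>\<inverse>(1) c is an idempotent of N
  acting as a left unit on N, whence R = N \<oplus> (1 - e)R.\<close>

definition complementary_right_ideals :: "'a::ring_1 set \<Rightarrow> 'a set \<Rightarrow> bool" where
  "complementary_right_ideals N K \<longleftrightarrow>
     right_ideal K \<and> N \<inter> K = {0} \<and> {x + y | x y. x \<in> N \<and> y \<in> K} = UNIV"

lemma RR_semisimple_iff: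
  "RR_semisimple TYPE('a::ring_1) \<longleftrightarrow>
     (\<forall>N::'a set. right_ideal N \<longrightarrow> (\<exists>K. complementary_right_ideals N K))"
  unfolding RR_semisimple_def complementary_right_ideals_def ..

lemma right_idealD:
  assumes "right_ideal I"
  shows right_ideal_zero: "0 \<in> I"
    and right_ideal_add: "x \<in> I \<Longrightarrow> y \<in> I \<Longrightarrow> x + y \<in> I"
    and right_ideal_uminus: "x \<in> I \<Longrightarrow> - x \<in> I"
    and right_ideal_mult_right: "x \<in> I \<Longrightarrow> x * r \<in> I"
  using assms unfolding right_ideal_def by auto

lemma right_ideal_diff: "right_ideal I \<Longrightarrow> x \<in> I \<Longrightarrow> y \<in> I \<Longrightarrow> x - y \<in> I"
  using right_ideal_add[of I x "- y"] right_ideal_uminus[of I y] by simp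

lemma rhom_onD:
  assumes "rhom_on A f" "x \<in> A" "y \<in> A"
  shows rhom_on_add: "f (x + y) = f x + f y"
    and rhom_on_mult_right: "f (x * r) = f x * r"
  using assms unfolding rhom_on_def by auto

lemma rhom_on_UNIV_eq_left_mult:
  "rhom_on (UNIV::'a::ring_1 set) g \<Longrightarrow> g x = g 1 * x"
  using rhom_on_mult_right[of UNIV g 1 1 x] by simp

lemma rhom_on_left_mult: "rhom_on UNIV (\<lambda>x::'a::ring_1. a * x)"
  unfolding rhom_on_def by (simp add: distrib_left mult.assoc)

lemma right_ideal_range_rhom:
  fixes f :: "'a::ring_1 \<Rightarrow> 'a"
  assumes f: "rhom_on UNIV f"
  shows "right_ideal (range f)"
proof -
  have "0 = f 0" using rhom_on_add[OF f, of 0 0] by simp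
  moreover have "f a + f b = f (a + b)" for a b using rhom_on_add[OF f] by simp
  moreover have "- f a = f (- a)" for a using rhom_on_mult_right[OF f, of a a "- 1"] by simp
  moreover have "f a * r = f (a * r)" for a r using rhom_on_mult_right[OF f] by simp
  ultimately show ?thesis unfolding right_ideal_def by (metis rangeE rangeI)
qed

lemma RR_cyclic_imp_right_ideal: "RR_cyclic A \<Longrightarrow> right_ideal A"
  unfolding RR_cyclic_def using right_ideal_range_rhom by blast

lemma complementary_right_ideals_projection:
  fixes A :: "'a::ring_1 set"
  assumes A: "right_ideal A" and AK: "complementary_right_ideals A K"
  obtains p where "rhom_on UNIV p" "\<And>x. p x \<in> A" "\<And>x. x \<in> A \<Longrightarrow> p x = x"
proof -
  have K: "right_ideal K" and disj: "A \<inter> K = {0}" and span: "{x + y | x y. x \<in> A \<and> y \<in> K} = UNIV"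
    using AK unfolding complementary_right_ideals_def by auto
  have unique: "a = b" if "a \<in> A" "x - a \<in> K" "b \<in> A" "x - b \<in> K" for x a b
  proof -
    have "a - b \<in> A" using right_ideal_diff[OF A] that by blast
    moreover have "a - b = (x - b) - (x - a)" by (simp add: algebra_simps)
    then have "a - b \<in> K" using right_ideal_diff[OF K] that by metis
    ultimately have "a - b \<in> A \<inter> K" by blast
    then show ?thesis using disj by simp
  qed
  have "\<exists>a. a \<in> A \<and> x - a \<in> K" for x
  proof -
    obtain a k where "a \<in> A" "k \<in> K" "x = a + k" using span by blast
    then show ?thesis by auto
  qed
  then obtain p where p: "\<And>x. p x \<in> A" "\<And>x. x - p x \<in> K" by metis
  have p_eq: "p x = a" if "a \<in> A" "x - a \<in> K" for x a
    using unique[OF p(1) p(2) that] .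
  have "p (x + y) = p x + p y" for x y
  proof (rule p_eq)
    show "p x + p y \<in> A" using right_ideal_add[OF A p(1) p(1)] .
    have "x + y - (p x + p y) = (x - p x) + (y - p y)" by (simp add: algebra_simps)
    then show "x + y - (p x + p y) \<in> K" using right_ideal_add[OF K p(2) p(2)] by metis
  qed
  moreover have "p (x * r) = p x * r" for x r
  proof (rule p_eq)
    show "p x * r \<in> A" using right_ideal_mult_right[OF A p(1)] .
    have "x * r - p x * r = (x - p x) * r" by (simp add: algebra_simps)
    then show "x * r - p x * r \<in> K" using right_ideal_mult_right[OF K p(2)] by metis
  qed
  ultimately have "rhom_on UNIV p" unfolding rhom_on_def by simp
  moreover have "p x = x" if "x \<in> A" for x
    using p_eq[OF that] right_ideal_zero[OF K] by simp
  ultimately show thesis using that p(1) by blast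
qed

lemma RR_semisimple_imp_qppi:
  assumes "RR_semisimple TYPE('a::ring_1)"
  shows "RR_quasi_pseudo_principally_injective TYPE('a)"
  unfolding RR_quasi_pseudo_principally_injective_def
proof (intro allI impI)
  fix A :: "'a set" and f
  assume "RR_cyclic A" and f: "rhom_on A f \<and> inj_on f A"
  then have A: "right_ideal A" by (simp add: RR_cyclic_imp_right_ideal)
  then obtain K where "complementary_right_ideals A K"
    using assms by (auto simp: RR_semisimple_iff)
  then obtain p where p: "rhom_on UNIV p" "\<And>x. p x \<in> A" "\<And>x. x \<in> A \<Longrightarrow> p x = x"
    using complementary_right_ideals_projection[OF A] by blast
  have "rhom_on UNIV (\<lambda>x. f (p x))"
    using f p unfolding rhom_on_def by simp
  then show "\<exists>g. rhom_on UNIV g \<and> (\<forall>x\<in>A. g x = f x)"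
    using p(3) by auto
qed

lemma rhom_on_the_inv_into:
  fixes \<phi> :: "'a::ring_1 \<Rightarrow> 'a"
  assumes N: "right_ideal N" and \<phi>: "rhom_on N \<phi>" "bij_betw \<phi> N UNIV"
  shows "rhom_on UNIV (the_inv_into N \<phi>)" and "range (the_inv_into N \<phi>) = N"
proof -
  let ?h = "the_inv_into N \<phi>"
  have inj: "inj_on \<phi> N" and onto: "\<phi> ` N = UNIV" using \<phi>(2) by (auto simp: bij_betw_def)
  have h_in: "?h y \<in> N" for y using the_inv_into_into[OF inj] onto by simp
  have \<phi>_h: "\<phi> (?h y) = y" for y using f_the_inv_into_f[OF inj] onto by simp
  have h_\<phi>: "?h (\<phi> n) = n" if "n \<in> N" for n using the_inv_into_f_f[OF inj that] .
  have "?h (x + y) = ?h x + ?h y" for x y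
    using h_\<phi>[OF right_ideal_add[OF N h_in h_in]] rhom_on_add[OF \<phi>(1) h_in h_in] \<phi>_h by simp
  moreover have "?h (x * r) = ?h x * r" for x r
    using h_\<phi>[OF right_ideal_mult_right[OF N h_in]] rhom_on_mult_right[OF \<phi>(1) h_in h_in] \<phi>_h
    by simp
  ultimately show "rhom_on UNIV ?h" unfolding rhom_on_def by simp
  show "range ?h = N" using h_in h_\<phi> by (metis image_subsetI rangeI subsetI subset_antisym)
qed

lemma complementary_right_ideals_left_unit:
  fixes e :: "'a::ring_1"
  assumes N: "right_ideal N" and e: "e \<in> N" and unit: "\<And>n. n \<in> N \<Longrightarrow> e * n = n"
  shows "complementary_right_ideals N (range (\<lambda>z. (1 - e) * z))"
proof -
  let ?K = "range (\<lambda>z. (1 - e) * z)"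
  have "y = 0" if "y \<in> N" "y \<in> ?K" for y
  proof -
    obtain z where z: "y = (1 - e) * z" using \<open>y \<in> ?K\<close> by blast
    have "e * y = (e - e * e) * z" unfolding z by (simp add: algebra_simps)
    then show ?thesis using unit[OF e] unit[OF \<open>y \<in> N\<close>] by simp
  qed
  then have "N \<inter> ?K = {0}"
    using right_ideal_zero[OF N] by (auto intro: image_eqI[of _ _ 0])
  moreover have "x = e * x + (1 - e) * x" for x by (simp add: algebra_simps)
  then have "{x + y | x y. x \<in> N \<and> y \<in> ?K} = UNIV"
    using right_ideal_mult_right[OF N e] by blast
  ultimately show ?thesis
    unfolding complementary_right_ideals_def
    using right_ideal_range_rhom[OF rhom_on_left_mult] by blast
qed

lemma self_similar_qppi_left_unit:
  fixes N :: "'a::ring_1 set"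
  assumes sim: "RR_self_similar TYPE('a)" and q: "RR_quasi_pseudo_principally_injective TYPE('a)"
    and N: "right_ideal N" "N \<noteq> {0}"
  obtains e where "e \<in> N" "\<And>n. n \<in> N \<Longrightarrow> e * n = n"
proof -
  obtain \<phi> where \<phi>: "rhom_on N \<phi>" "bij_betw \<phi> N UNIV"
    using sim N unfolding RR_self_similar_def by blast
  let ?h = "the_inv_into N \<phi>"
  have "RR_cyclic N"
    using rhom_on_the_inv_into[OF N(1) \<phi>] unfolding RR_cyclic_def by metis
  moreover have inj: "inj_on \<phi> N" using \<phi>(2) by (simp add: bij_betw_def)
  ultimately obtain g where g: "rhom_on UNIV g" "\<forall>x\<in>N. g x = \<phi> x"
    using q \<phi>(1) unfolding RR_quasi_pseudo_principally_injective_def by blast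
  define c where "c = g 1"
  have \<phi>_mult: "\<phi> x = c * x" if "x \<in> N" for x
    using g that rhom_on_UNIV_eq_left_mult unfolding c_def by metis
  define n\<^sub>0 where "n\<^sub>0 = ?h 1"
  have n\<^sub>0: "n\<^sub>0 \<in> N" using rhom_on_the_inv_into(2)[OF N(1) \<phi>] unfolding n\<^sub>0_def by blast
  have "c * n\<^sub>0 = 1"
    using \<phi>_mult[OF n\<^sub>0] f_the_inv_into_f[OF inj, of 1] \<phi>(2)
    unfolding n\<^sub>0_def bij_betw_def by simp
  have "n\<^sub>0 * c * n = n" if n: "n \<in> N" for n
  proof -
    have "n\<^sub>0 * c * n \<in> N" using right_ideal_mult_right[OF N(1) n\<^sub>0] by (simp add: mult.assoc)
    moreover have "\<phi> (n\<^sub>0 * c * n) = \<phi> n"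
      using \<phi>_mult[OF calculation] \<phi>_mult[OF n] \<open>c * n\<^sub>0 = 1\<close> by (simp add: mult.assoc[symmetric])
    ultimately show ?thesis using inj n by (auto dest: inj_onD)
  qed
  moreover have "n\<^sub>0 * c \<in> N" using right_ideal_mult_right[OF N(1) n\<^sub>0] .
  ultimately show thesis using that by blast
qed

lemma self_similar_qppi_imp_RR_semisimple:
  assumes sim: "RR_self_similar TYPE('a::ring_1)"
    and q: "RR_quasi_pseudo_principally_injective TYPE('a)"
  shows "RR_semisimple TYPE('a)"
  unfolding RR_semisimple_iff
proof (intro allI impI)
  fix N :: "'a set"
  assume N: "right_ideal N"
  show "\<exists>K. complementary_right_ideals N K"
  proof (cases "N = {0}")
    case True
    then have "complementary_right_ideals N UNIV"
      unfolding complementary_right_ideals_def right_ideal_def by auto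
    then show ?thesis ..
  next
    case False
    then obtain e where "e \<in> N" "\<And>n. n \<in> N \<Longrightarrow> e * n = n"
      using self_similar_qppi_left_unit[OF sim q N] by blast
    then show ?thesis using complementary_right_ideals_left_unit[OF N] by blast
  qed
qed

theorem corollary2p5:
  assumes "RR_self_similar TYPE('a::ring_1)"
  shows "RR_quasi_pseudo_principally_injective TYPE('a) \<longleftrightarrow> RR_semisimple TYPE('a)"
  using self_similar_qppi_imp_RR_semisimple[OF assms] RR_semisimple_imp_qppi by (rule iffI)

end
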